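(* Consider the subsidy game described in the context, and suppose that in period 2 both developers choose openness $\bar\eta$ and the incumbent charges $w_2=w_L$. Define $$\bar{\eta}_{Hg} = \frac{k(\theta+s-w_H)}{2c-k(\theta+s-w_H)},\qquad \bar{\eta}_{Lg} = \frac{k(\theta+s-w_L)}{2c-k(\theta+s-w_L)}.$$ (a) $\bar\eta_{Hg}\le\bar\eta_{Lg}$, and: if the incumbent charges $w_1=w_H$ in period 1, the deployer selects the incumbent in period 2 iff $\eta_1\le\bar\eta_{Hg}$; if it charges $w_1=w_L$, the deployer selects the incumbent in period 2 iff $\eta_1\le\bar\eta_{Lg}$. (b) Conditional on the period-2 outcome, the incumbent's total profit is increasing in $\eta_1$: with $\alpha_1=\frac{(1+\eta_1)(\theta-w_1+s)}{2c}$ and $\alpha_2=\frac{(1+k\alpha_1)(1+\bar\eta)(\theta-w_L+s)}{2c}$, both $w_1\alpha_1+w_L\alpha_2$ and $w_1\alpha_1$ are monotonically increasing in $\eta_1\in[0,\bar\eta]$.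
   Context: Parameters: $\theta>0$, $c>0$, license fees $0\le w_L\le w_H\le\theta/2$, openness cap $\bar\eta>0$, data flywheel parameter $k\ge0$, subsidy $0\le s\le w_L$. Two periods $t\in\{1,2\}$; users choose engagement $\alpha_t$ maximizing $Q_t\alpha_t-\alpha_t^2/2$, so $\alpha_t=Q_t$, where $Q_t$ is the deployer's fine-tuning effort. Period 1: an incumbent developer chooses $w_1\in\{w_H,w_L\}$ and openness $\eta_1\in[0,\bar\eta]$; the deployer chooses $Q_1$ to maximize $(\theta-w_1+s)\alpha_1-\frac{cQ_1^2}{1+\eta_1}$. Period 2: the incumbent chooses $w_2\in\{w_H,w_L\}$ and $\eta_2\in[0,\bar\eta]$; an entrant charges $w_L$ and chooses $\tilde\eta_2\in[0,\bar\eta]$. For each developer the deployer chooses effort optimally: with the incumbent its period-2 profit is $(\theta-w_2+s)Q_2-\frac{cQ_2^2}{(1+k\alpha_1)(1+\eta_2)}$, with the entrant $(\theta-w_L+s)Q_2-\frac{cQ_2^2}{(1+\eta_1)(1+\tilde\eta_2)}$; it selects the incumbent iff the incumbent's optimized profit is at least the entrant's. Developers receive the full fee per unit: incumbent's payoff $w_1\alpha_1+w_2\alpha_2$ if selected in period 2, else $w_1\alpha_1$; entrant's payoff $w_L\alpha_2$ if selected, else $0$. Standing assumption: $k\le\min\Big\{\frac{2c\bar\eta}{(1+\bar\eta)(\theta-w_L+s)},\frac{2c(2\theta+2s-w_H-w_L)(w_H-w_L)}{(\theta-w_H+s)^2(\theta-w_L+s)}\Big\}$. *)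

theory Defs
  imports Complex_Main
begin

text \<open>Deployer's profit from fine-tuning effort Q when the per-unit margin is m and
  the effective cost divisor is D (engagement equals effort: alpha = Q).\<close>
definition deployer_profit :: "real \<Rightarrow> real \<Rightarrow> real \<Rightarrow> real \<Rightarrow> real" where
  "deployer_profit c m D Q = m * Q - c * Q^2 / D"

definition opt_profit :: "real \<Rightarrow> real \<Rightarrow> real \<Rightarrow> real" where
  "opt_profit c m D = Sup (deployer_profit c m D ` {0..})"

definition is_period1_effort :: "real \<Rightarrow> real \<Rightarrow> real \<Rightarrow> real \<Rightarrow> real \<Rightarrow> real \<Rightarrow> bool" where
  "is_period1_effort c \<theta> s w1 \<eta>1 Q \<longleftrightarrow>
     Q \<ge> 0 \<and> (\<forall>Q'\<ge>0. deployer_profit c (\<theta> - w1 + s) (1 + \<eta>1) Q'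
                        \<le> deployer_profit c (\<theta> - w1 + s) (1 + \<eta>1) Q)"

definition selects_incumbent ::
  "real \<Rightarrow> real \<Rightarrow> real \<Rightarrow> real \<Rightarrow> real \<Rightarrow> real \<Rightarrow> real \<Rightarrow> real \<Rightarrow> real \<Rightarrow> real \<Rightarrow> bool" where
  "selects_incumbent c \<theta> s wL k \<alpha>1 \<eta>1 w2 \<eta>2 \<eta>e2 \<longleftrightarrow>
     opt_profit c (\<theta> - w2 + s) ((1 + k * \<alpha>1) * (1 + \<eta>2))
       \<ge> opt_profit c (\<theta> - wL + s) ((1 + \<eta>1) * (1 + \<eta>e2))"

definition eta_g :: "real \<Rightarrow> real \<Rightarrow> real \<Rightarrow> real \<Rightarrow> real \<Rightarrow> real" where
  "eta_g c k \<theta> s w = k * (\<theta> + s - w) / (2 * c - k * (\<theta> + s - w))"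

end

theory Submission
  imports Defs
begin

text \<open>Completing the square, the deployer's profit with margin \<open>m\<close> and cost divisor \<open>D\<close>
  peaks at \<open>Q = m D / (2c)\<close> with value \<open>m\<^sup>2 D / (4c)\<close>. Period-1 engagement is therefore
  \<open>\<alpha>\<^sub>1 = (\<theta> - w\<^sub>1 + s)(1 + \<eta>\<^sub>1)/(2c)\<close>. Both period-2 offers carry the margin
  \<open>\<theta> - wL + s\<close> and the openness \<open>\<eta>bar\<close>, so the deployer stays with the incumbent iff
  its data advantage beats the openness the entrant inherits: \<open>\<eta>\<^sub>1 \<le> k \<alpha>\<^sub>1\<close>. Solving
  this linear inequality in \<open>\<eta>\<^sub>1\<close> gives the threshold \<open>eta_g\<close>. The first bound on \<open>k\<close> keeps \<open>k (\<theta> + s - w) < 2c\<close>, so the threshold is well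
  defined and increasing in the margin. Both profit expressions in (b) are affine in \<open>\<eta>\<^sub>1\<close>
  with nonnegative slope.\<close>

lemma deployer_profit_completed_square:
  assumes "D > 0" "c > 0"
  shows "deployer_profit c m D Q = m\<^sup>2 * D / (4 * c) - c / D * (Q - m * D / (2 * c))\<^sup>2"
  using assms by (simp add: deployer_profit_def field_simps power2_eq_square)

lemma opt_profit_eq:
  assumes "D > 0" "c > 0" "m \<ge> 0"
  shows "opt_profit c m D = m\<^sup>2 * D / (4 * c)"
proof -
  have attained: "m\<^sup>2 * D / (4 * c) \<in> deployer_profit c m D ` {0..}"
  proof
    show "m\<^sup>2 * D / (4 * c) = deployer_profit c m D (m * D / (2 * c))"
      using assms by (simp add: deployer_profit_completed_square)
  qed (use assms in simp)
  have "\<forall>x \<in> deployer_profit c m D ` {0..}. x \<le> m\<^sup>2 * D / (4 * c)"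
    using assms by (auto simp: deployer_profit_completed_square)
  then show ?thesis
    unfolding opt_profit_def using cSup_eq_maximum[OF attained] by blast
qed

lemma opt_profit_le_iff:
  assumes "D\<^sub>1 > 0" "D\<^sub>2 > 0" "c > 0" "m > 0"
  shows "opt_profit c m D\<^sub>1 \<le> opt_profit c m D\<^sub>2 \<longleftrightarrow> D\<^sub>1 \<le> D\<^sub>2"
proof -
  have "m\<^sup>2 / (4 * c) > 0" using assms by simp
  then have "m\<^sup>2 / (4 * c) * D\<^sub>1 \<le> m\<^sup>2 / (4 * c) * D\<^sub>2 \<longleftrightarrow> D\<^sub>1 \<le> D\<^sub>2"
    by (rule mult_le_cancel_left_pos)
  then show ?thesis using assms by (simp add: opt_profit_eq)
qed

lemma period1_effort_eq:
  assumes "is_period1_effort c \<theta> s w \<eta>\<^sub>1 Q" "\<eta>\<^sub>1 > -1" "c > 0" "\<theta> - w + s \<ge> 0"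
  shows "Q = (\<theta> - w + s) * (1 + \<eta>\<^sub>1) / (2 * c)"
proof -
  let ?m = "\<theta> - w + s" and ?D = "1 + \<eta>\<^sub>1"
  have "deployer_profit c ?m ?D (?m * ?D / (2 * c)) \<le> deployer_profit c ?m ?D Q"
    using assms unfolding is_period1_effort_def by simp
  then have "c / ?D * (Q - ?m * ?D / (2 * c))\<^sup>2 \<le> 0"
    using assms by (simp add: deployer_profit_completed_square)
  moreover have "c / ?D > 0" using assms by simp
  ultimately have "(Q - ?m * ?D / (2 * c))\<^sup>2 \<le> 0"
    by (metis mult_le_0_iff not_le)
  then show ?thesis by simp
qed

lemma selects_incumbent_iff_le_eta_g:
  assumes "is_period1_effort c \<theta> s w \<eta>\<^sub>1 \<alpha>\<^sub>1" "\<eta>\<^sub>1 \<ge> 0" "\<eta> \<ge> 0"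
    and "c > 0" "k \<ge> 0" "\<theta> - w + s \<ge> 0" "\<theta> - wL + s > 0" "k * (\<theta> - w + s) < 2 * c"
  shows "selects_incumbent c \<theta> s wL k \<alpha>\<^sub>1 \<eta>\<^sub>1 wL \<eta> \<eta> \<longleftrightarrow> \<eta>\<^sub>1 \<le> eta_g c k \<theta> s w"
proof -
  define M where "M = \<theta> - w + s"
  have \<alpha>\<^sub>1: "\<alpha>\<^sub>1 = M * (1 + \<eta>\<^sub>1) / (2 * c)"
    unfolding M_def using period1_effort_eq assms by simp
  have k\<alpha>\<^sub>1: "2 * c * (k * \<alpha>\<^sub>1) = k * M * (1 + \<eta>\<^sub>1)"
    using assms unfolding \<alpha>\<^sub>1 by simp
  have "k * \<alpha>\<^sub>1 \<ge> 0" using assms unfolding \<alpha>\<^sub>1 M_def by simp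
  then have "selects_incumbent c \<theta> s wL k \<alpha>\<^sub>1 \<eta>\<^sub>1 wL \<eta> \<eta>
      \<longleftrightarrow> (1 + \<eta>\<^sub>1) * (1 + \<eta>) \<le> (1 + k * \<alpha>\<^sub>1) * (1 + \<eta>)"
    unfolding selects_incumbent_def using assms by (simp add: opt_profit_le_iff)
  also have "\<dots> \<longleftrightarrow> 2 * c * \<eta>\<^sub>1 \<le> 2 * c * (k * \<alpha>\<^sub>1)"
    using assms by simp
  also have "\<dots> \<longleftrightarrow> \<eta>\<^sub>1 * (2 * c - k * M) \<le> k * M"
    unfolding k\<alpha>\<^sub>1 by (simp add: algebra_simps)
  also have "\<dots> \<longleftrightarrow> \<eta>\<^sub>1 \<le> k * M / (2 * c - k * M)"
    using assms unfolding M_def by (simp add: pos_le_divide_eq)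
  finally show ?thesis
    unfolding eta_g_def M_def by (simp add: algebra_simps)
qed

lemma eta_g_antimono:
  assumes "w \<le> w'" "k \<ge> 0" "\<theta> + s - w' \<ge> 0" "k * (\<theta> + s - w) < 2 * c"
  shows "eta_g c k \<theta> s w' \<le> eta_g c k \<theta> s w"
proof -
  have "0 \<le> k * (\<theta> + s - w')" "k * (\<theta> + s - w') \<le> k * (\<theta> + s - w)"
    using assms by (simp_all add: mult_left_mono)
  then show ?thesis
    unfolding eta_g_def using assms(4) by (intro frac_le) auto
qed

lemma flywheel_below_cost:
  fixes k c \<eta> m :: real
  assumes "k \<le> 2 * c * \<eta> / ((1 + \<eta>) * m)" "c > 0" "\<eta> > 0" "m > 0"
  shows "k * m < 2 * c"
proof -
  have "(1 + \<eta>) * m > 0" using assms by simp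
  then have "k * m * (1 + \<eta>) \<le> 2 * c * \<eta>"
    using assms(1) by (simp add: pos_le_divide_eq mult_ac)
  also have "\<dots> < 2 * c * (1 + \<eta>)" using assms by simp
  finally show ?thesis using assms by simp
qed

lemma incumbent_profit_mono:
  fixes c k w\<^sub>1 wL m\<^sub>1 m\<^sub>2 \<eta> :: real
  assumes "c > 0" "k \<ge> 0" "w\<^sub>1 \<ge> 0" "wL \<ge> 0" "m\<^sub>1 \<ge> 0" "m\<^sub>2 \<ge> 0" "\<eta> \<ge> -1"
  shows "mono (\<lambda>\<eta>\<^sub>1. w\<^sub>1 * ((1 + \<eta>\<^sub>1) * m\<^sub>1 / (2 * c)))"
    and "mono (\<lambda>\<eta>\<^sub>1. w\<^sub>1 * ((1 + \<eta>\<^sub>1) * m\<^sub>1 / (2 * c))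
                  + wL * ((1 + k * ((1 + \<eta>\<^sub>1) * m\<^sub>1 / (2 * c))) * (1 + \<eta>) * m\<^sub>2 / (2 * c)))"
proof -
  have \<alpha>\<^sub>1_mono: "(1 + x) * m\<^sub>1 / (2 * c) \<le> (1 + y) * m\<^sub>1 / (2 * c)" if "x \<le> y" for x y :: real
    using that assms by (intro divide_right_mono mult_right_mono) auto
  show "mono (\<lambda>\<eta>\<^sub>1. w\<^sub>1 * ((1 + \<eta>\<^sub>1) * m\<^sub>1 / (2 * c)))"
    using \<alpha>\<^sub>1_mono assms by (intro monoI mult_left_mono) auto
  show "mono (\<lambda>\<eta>\<^sub>1. w\<^sub>1 * ((1 + \<eta>\<^sub>1) * m\<^sub>1 / (2 * c))
                  + wL * ((1 + k * ((1 + \<eta>\<^sub>1) * m\<^sub>1 / (2 * c))) * (1 + \<eta>) * m\<^sub>2 / (2 * c)))"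
    using \<alpha>\<^sub>1_mono assms
    by (intro monoI add_mono mult_left_mono divide_right_mono mult_right_mono) auto
qed

theorem mainTheorem7:
  fixes \<theta> c wL wH \<eta>bar k s :: real
  assumes "\<theta> > 0" "c > 0"
    and "0 \<le> wL" "wL \<le> wH" "wH \<le> \<theta> / 2"
    and "\<eta>bar > 0" "k \<ge> 0"
    and "0 \<le> s" "s \<le> wL"
    and "k \<le> min (2 * c * \<eta>bar / ((1 + \<eta>bar) * (\<theta> - wL + s)))
                 (2 * c * (2 * \<theta> + 2 * s - wH - wL) * (wH - wL)
                    / ((\<theta> - wH + s)^2 * (\<theta> - wL + s)))"
  shows "eta_g c k \<theta> s wH \<le> eta_g c k \<theta> s wL
    \<and> (\<forall>\<eta>1 \<alpha>1. 0 \<le> \<eta>1 \<longrightarrow> \<eta>1 \<le> \<eta>bar \<longrightarrow> is_period1_effort c \<theta> s wH \<eta>1 \<alpha>1 \<longrightarrow>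
          (selects_incumbent c \<theta> s wL k \<alpha>1 \<eta>1 wL \<eta>bar \<eta>bar \<longleftrightarrow> \<eta>1 \<le> eta_g c k \<theta> s wH))
    \<and> (\<forall>\<eta>1 \<alpha>1. 0 \<le> \<eta>1 \<longrightarrow> \<eta>1 \<le> \<eta>bar \<longrightarrow> is_period1_effort c \<theta> s wL \<eta>1 \<alpha>1 \<longrightarrow>
          (selects_incumbent c \<theta> s wL k \<alpha>1 \<eta>1 wL \<eta>bar \<eta>bar \<longleftrightarrow> \<eta>1 \<le> eta_g c k \<theta> s wL))
    \<and> (\<forall>w1 \<in> {wH, wL}.
         (let \<alpha>1 = (\<lambda>\<eta>1. (1 + \<eta>1) * (\<theta> - w1 + s) / (2 * c));
              \<alpha>2 = (\<lambda>\<eta>1. (1 + k * \<alpha>1 \<eta>1) * (1 + \<eta>bar) * (\<theta> - wL + s) / (2 * c))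
          in mono_on {0..\<eta>bar} (\<lambda>\<eta>1. w1 * \<alpha>1 \<eta>1 + wL * \<alpha>2 \<eta>1)
           \<and> mono_on {0..\<eta>bar} (\<lambda>\<eta>1. w1 * \<alpha>1 \<eta>1)))"
proof -
  have margins: "\<theta> - wL + s > 0" "\<theta> - wH + s > 0"
    using assms by auto
  have fee_nonneg: "0 \<le> w" "0 \<le> \<theta> - w + s" if "w \<in> {wH, wL}" for w
    using that assms margins by auto
  have kL: "k * (\<theta> - wL + s) < 2 * c"
    using assms margins by (intro flywheel_below_cost[where \<eta> = \<eta>bar]) auto
  have "k * (\<theta> - wH + s) \<le> k * (\<theta> - wL + s)"
    using assms by (intro mult_left_mono) auto
  with kL have kH: "k * (\<theta> - wH + s) < 2 * c" by simp
  have "eta_g c k \<theta> s wH \<le> eta_g c k \<theta> s wL"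
    using assms margins kL by (intro eta_g_antimono) (auto simp: algebra_simps)
  moreover have "selects_incumbent c \<theta> s wL k \<alpha>\<^sub>1 \<eta>\<^sub>1 wL \<eta>bar \<eta>bar \<longleftrightarrow> \<eta>\<^sub>1 \<le> eta_g c k \<theta> s w"
    if "w \<in> {wH, wL}" "is_period1_effort c \<theta> s w \<eta>\<^sub>1 \<alpha>\<^sub>1" "\<eta>\<^sub>1 \<ge> 0" for w \<eta>\<^sub>1 \<alpha>\<^sub>1
    using that assms margins kL kH by (intro selects_incumbent_iff_le_eta_g) auto
  moreover have "mono_on {0..\<eta>bar} (\<lambda>\<eta>\<^sub>1. w * ((1 + \<eta>\<^sub>1) * (\<theta> - w + s) / (2 * c)))"
    and "mono_on {0..\<eta>bar} (\<lambda>\<eta>\<^sub>1. w * ((1 + \<eta>\<^sub>1) * (\<theta> - w + s) / (2 * c))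
      + wL * ((1 + k * ((1 + \<eta>\<^sub>1) * (\<theta> - w + s) / (2 * c))) * (1 + \<eta>bar) * (\<theta> - wL + s) / (2 * c)))"
    if "w \<in> {wH, wL}" for w
    using incumbent_profit_mono[of c k w wL "\<theta> - w + s" "\<theta> - wL + s" \<eta>bar]
      fee_nonneg[OF that] assms margins
    by (simp_all add: mono_imp_mono_on)
  ultimately show ?thesis
    unfolding Let_def by auto
qed

end
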